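(* Let $I \subset \mathbb{R}$ be an interval (open or closed), let $d$ be an orderly metric on $\mathbb{R}$, and let $f \colon (I,d) \to (\mathbb{R},d)$ be an $(M,\epsilon)$-quasi-isometric embedding. Then $f$ is $2\epsilon M$-monotone relative to $d$, and for all $a,b \in I$ the set $f([a,b])$ is $\epsilon$-dense in $[f(a),f(b)]$, i.e. $\inf_{x \in [a,b]} d(y,f(x)) \leq \epsilon$ for every $y \in [f(a),f(b)]$.
   Context: A map $f \colon (X,d) \to (Y,d')$ is an $(M,\epsilon)$-quasi-isometric embedding if $M^{-1}d(x,y) - \epsilon \leq d'(f(x),f(y)) \leq Md(x,y) + \epsilon$ for all $x,y \in X$. A metric $d$ on $\mathbb{R}$ is orderly if the identity $(\mathbb{R},|\cdot|) \to (\mathbb{R},d)$ is continuous and $\max\{d(x,y),d(y,z)\} \leq d(x,z)$ whenever $x \leq y \leq z$. For $E \subset \mathbb{R}$ and $\delta > 0$, a map $f \colon E \to \mathbb{R}$ is $\delta$-monotone relative to $d$ if either $f(a) < f(b)$ for all $a,b \in E$ with $a < b$ and $d(a,b) > \delta$, or $f(a) > f(b)$ for all such $a,b$. Here $[u,v] = \{x : u \leq x \leq v\}$. *)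

theory Defs
  imports "HOL-Analysis.Analysis"
begin

definition orderly :: "(real \<Rightarrow> real \<Rightarrow> real) \<Rightarrow> bool" where
  "orderly d \<longleftrightarrow>
     Metric_space UNIV d \<and>
     continuous_map euclideanreal (Metric_space.mtopology UNIV d) id \<and>
     (\<forall>x y z. x \<le> y \<and> y \<le> z \<longrightarrow> max (d x y) (d y z) \<le> d x z)"

definition qi_embedding ::
  "real \<Rightarrow> real \<Rightarrow> ('a \<Rightarrow> 'a \<Rightarrow> real) \<Rightarrow> 'a set \<Rightarrow> ('b \<Rightarrow> 'b \<Rightarrow> real) \<Rightarrow> ('a \<Rightarrow> 'b) \<Rightarrow> bool" where
  "qi_embedding M eps d X d' f \<longleftrightarrow>
     (\<forall>x\<in>X. \<forall>y\<in>X. d x y / M - eps \<le> d' (f x) (f y) \<and> d' (f x) (f y) \<le> M * d x y + eps)"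

definition delta_monotone ::
  "(real \<Rightarrow> real \<Rightarrow> real) \<Rightarrow> real \<Rightarrow> real set \<Rightarrow> (real \<Rightarrow> real) \<Rightarrow> bool" where
  "delta_monotone d \<delta> E f \<longleftrightarrow>
     (\<forall>a\<in>E. \<forall>b\<in>E. a < b \<and> d a b > \<delta> \<longrightarrow> f a < f b) \<or>
     (\<forall>a\<in>E. \<forall>b\<in>E. a < b \<and> d a b > \<delta> \<longrightarrow> f a > f b)"

end

theory Submission
  imports Defs
begin

text \<open>A coarse intermediate value theorem: where f crosses a value c at a point s, there are
  points t arbitrarily close to s with c between f s and f t. Orderliness gives
  d c (f s) \<le> d (f s) (f t) \<le> M d(s,t) + eps, and continuity of d makes d(s,t) small, so
  f([a,b]) is eps-dense in [f a, f b].
  If f were not 2 eps M-monotone, there would be p < q \<le> q' with d p q > 2 eps M and f p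
  between f q and f q' (or the mirror situation). Density puts f p near some f t with t in
  [q,q'], and the lower quasi-isometry bound then forces d p t < d p q, contradicting
  orderliness since p < q \<le> t.\<close>

lemma crossing_point_le:
  fixes g :: "real \<Rightarrow> real"
  assumes "v \<le> w" and "g v \<le> c" and "c \<le> g w"
  shows "\<exists>s\<in>{v..w}. \<forall>e>0. \<exists>t\<in>{v..w}. \<bar>t - s\<bar> < e \<and> min (g s) (g t) \<le> c \<and> c \<le> max (g s) (g t)"
proof -
  define L where "L = {x\<in>{v..w}. g x \<le> c}"
  define s where "s = Sup L"
  have "v \<in> L" using assms by (auto simp: L_def)
  have bdd: "bdd_above L" unfolding L_def by (rule bdd_aboveI[of _ w]) auto
  have s: "s \<in> {v..w}"
    unfolding s_def using \<open>v \<in> L\<close> bdd by (auto intro: cSup_upper cSup_least simp: L_def)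
  have "\<exists>t\<in>{v..w}. \<bar>t - s\<bar> < e \<and> min (g s) (g t) \<le> c \<and> c \<le> max (g s) (g t)" if "e > 0" for e
  proof (cases "g s \<le> c")
    case True
    show ?thesis
    proof (cases "s = w")
      case True
      then show ?thesis using \<open>g s \<le> c\<close> assms(3) s \<open>e > 0\<close> by (intro bexI[of _ w]) auto
    next
      case False
      define t where "t = min w (s + e/2)"
      have "s < t" using s False \<open>e > 0\<close> by (simp add: t_def)
      have t: "t \<in> {v..w}" using s \<open>s < t\<close> by (auto simp: t_def)
      have "t \<notin> L" using \<open>s < t\<close> bdd unfolding s_def by (meson cSup_upper not_le)
      then have "c < g t" using t by (auto simp: L_def)
      moreover have "\<bar>t - s\<bar> < e" using \<open>s < t\<close> \<open>e > 0\<close> by (simp add: t_def)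
      ultimately show ?thesis using t True by (intro bexI[of _ t]) auto
    qed
  next
    case False
    have "s - e < Sup L" using \<open>e > 0\<close> unfolding s_def by simp
    then obtain t where "t \<in> L" and "s - e < t"
      using \<open>v \<in> L\<close> less_cSup_iff[OF _ bdd] by blast
    moreover have "t \<le> s" unfolding s_def using \<open>t \<in> L\<close> bdd by (rule cSup_upper)
    ultimately show ?thesis using False by (intro bexI[of _ t]) (auto simp: L_def)
  qed
  then show ?thesis using s by blast
qed

lemma crossing_point:
  fixes g :: "real \<Rightarrow> real"
  assumes "v \<le> w" and "min (g v) (g w) \<le> c" and "c \<le> max (g v) (g w)"
  shows "\<exists>s\<in>{v..w}. \<forall>e>0. \<exists>t\<in>{v..w}. \<bar>t - s\<bar> < e \<and> min (g s) (g t) \<le> c \<and> c \<le> max (g s) (g t)"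
proof (cases "g v \<le> g w")
  case True
  then show ?thesis using crossing_point_le[of v w g c] assms by simp
next
  case False
  then have "- g v \<le> - c" and "- c \<le> - g w" using assms by auto
  moreover have "min (- a) (- b) \<le> - c \<longleftrightarrow> c \<le> max a b"
    and "- c \<le> max (- a) (- b) \<longleftrightarrow> min a b \<le> c" for a b :: real
    by linarith+
  ultimately show ?thesis using crossing_point_le[of v w "\<lambda>x. - g x" "- c"] \<open>v \<le> w\<close>
    by (simp only:) blast
qed

lemma orderly_metric_space: "orderly d \<Longrightarrow> Metric_space UNIV d"
  by (simp add: orderly_def)

lemma orderly_le_right: "orderly d \<Longrightarrow> x \<le> y \<Longrightarrow> y \<le> z \<Longrightarrow> d x y \<le> d x z"
  and orderly_le_left: "orderly d \<Longrightarrow> x \<le> y \<Longrightarrow> y \<le> z \<Longrightarrow> d y z \<le> d x z"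
  by (auto simp: orderly_def)

lemma orderly_between:
  assumes "orderly d" and "min y z \<le> c" and "c \<le> max y z"
  shows "d c y \<le> d y z"
proof -
  interpret Metric_space UNIV d using assms(1) by (rule orderly_metric_space)
  show ?thesis
    using orderly_le_right[OF assms(1), of y c z] orderly_le_left[OF assms(1), of z c y] assms(2,3)
    by (cases "y \<le> z") (auto simp: commute)
qed

lemma orderly_dist_small:
  assumes "orderly d" and "r > 0"
  shows "\<exists>e>0. \<forall>x. \<bar>x - s\<bar> < e \<longrightarrow> d s x < r"
proof -
  interpret Metric_space UNIV d using assms(1) by (rule orderly_metric_space)
  have "continuous_map euclideanreal mtopology id"
    using assms(1) by (simp add: orderly_def)
  then obtain U where "open U" "s \<in> U" and U: "\<And>x. x \<in> U \<Longrightarrow> d s x < r"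
    using assms(2) unfolding continuous_map_to_metric
    by (metis in_mball id_apply open_openin topspace_euclidean UNIV_I)
  then obtain e where "e > 0" "ball s e \<subseteq> U" using open_contains_ball by blast
  moreover have "x \<in> ball s e" if "\<bar>x - s\<bar> < e" for x
    using that by (simp add: dist_real_def abs_minus_commute)
  ultimately show ?thesis using U by blast
qed

locale orderly_qi_embedding =
  fixes d :: "real \<Rightarrow> real \<Rightarrow> real" and I :: "real set" and f :: "real \<Rightarrow> real"
    and M eps :: real
  assumes orderly: "orderly d" and interval: "is_interval I"
    and M_pos: "M > 0" and eps_nonneg: "eps \<ge> 0"
    and qi: "qi_embedding M eps d I d f"
begin

lemma qi_lower: "x \<in> I \<Longrightarrow> y \<in> I \<Longrightarrow> d x y / M - eps \<le> d (f x) (f y)"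
  and qi_upper: "x \<in> I \<Longrightarrow> y \<in> I \<Longrightarrow> d (f x) (f y) \<le> M * d x y + eps"
  using qi unfolding qi_embedding_def by blast+

lemma atLeastAtMost_subset:
  assumes "v \<in> I" and "w \<in> I"
  shows "{v..w} \<subseteq> I"
  using mem_is_interval_1_I[OF interval assms] by auto

lemma dense_image_between:
  assumes "v \<in> I" and "w \<in> I" and "v \<le> w"
    and "min (f v) (f w) \<le> c" and "c \<le> max (f v) (f w)" and "r > 0"
  shows "\<exists>s\<in>{v..w}. d c (f s) < eps + r"
proof -
  obtain s where s: "s \<in> {v..w}" and cross:
      "\<And>e. e > 0 \<Longrightarrow> \<exists>t\<in>{v..w}. \<bar>t - s\<bar> < e \<and> min (f s) (f t) \<le> c \<and> c \<le> max (f s) (f t)"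
    using crossing_point[OF assms(3-5)] by blast
  have "r / M > 0" using \<open>r > 0\<close> M_pos by simp
  then obtain e where "e > 0" and e: "\<And>t. \<bar>t - s\<bar> < e \<Longrightarrow> d s t < r / M"
    using orderly_dist_small[OF orderly] by blast
  obtain t where t: "t \<in> {v..w}" "\<bar>t - s\<bar> < e" "min (f s) (f t) \<le> c" "c \<le> max (f s) (f t)"
    using cross[OF \<open>e > 0\<close>] by blast
  have "d c (f s) \<le> d (f s) (f t)" using orderly_between[OF orderly t(3,4)] .
  also have "\<dots> \<le> M * d s t + eps"
    using qi_upper s t(1) atLeastAtMost_subset[OF assms(1,2)] by blast
  also have "\<dots> < eps + r" using e[OF t(2)] M_pos by (simp add: field_simps)
  finally show ?thesis using s by blast
qed

lemma near_interval_if_between: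
  assumes "u \<in> I" and "v \<in> I" and "w \<in> I" and "v \<le> w"
    and "min (f v) (f w) \<le> f u" and "f u \<le> max (f v) (f w)" and "r > 0"
  shows "\<exists>t\<in>{v..w}. d u t < 2 * eps * M + r"
proof -
  have "r / M > 0" using \<open>r > 0\<close> M_pos by simp
  then obtain t where t: "t \<in> {v..w}" and close: "d (f u) (f t) < eps + r / M"
    using dense_image_between[OF assms(2-6)] by blast
  have "d u t / M - eps \<le> d (f u) (f t)"
    using qi_lower assms(1) t atLeastAtMost_subset[OF assms(2,3)] by blast
  with close have "d u t / M < 2 * eps + r / M" by simp
  then have "d u t < (2 * eps + r / M) * M" using M_pos by (simp add: pos_divide_less_eq)
  also have "\<dots> = 2 * eps * M + r" using M_pos by (simp add: field_simps)
  finally show ?thesis using t by blast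
qed

lemma eq_imp_dist_le:
  assumes "p \<in> I" and "q \<in> I" and "f p = f q"
  shows "d p q \<le> eps * M"
proof -
  interpret Metric_space UNIV d using orderly by (rule orderly_metric_space)
  show ?thesis using qi_lower[OF assms(1,2)] assms(3) M_pos by (simp add: field_simps)
qed

lemma far_imp_neq:
  assumes "p \<in> I" and "q \<in> I" and "d p q > 2 * eps * M"
  shows "f p \<noteq> f q"
proof
  assume "f p = f q"
  then have "d p q \<le> eps * M" using eq_imp_dist_le assms(1,2) by blast
  moreover have "eps * M \<le> 2 * eps * M" using eps_nonneg M_pos by simp
  ultimately show False using assms(3) by linarith
qed

lemma order_extend_right:
  assumes "p \<in> I" and "q \<in> I" and "q' \<in> I" and "p < q" and "q \<le> q'"
    and far: "d p q > 2 * eps * M"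
  shows "f p < f q \<longleftrightarrow> f p < f q'"
proof (rule ccontr)
  have "d p q' > 2 * eps * M" using orderly_le_right[OF orderly, of p q q'] assms(4,5) far by linarith
  then have "f p \<noteq> f q'" using far_imp_neq assms(1,3) by blast
  moreover have "f p \<noteq> f q" using far_imp_neq assms(1,2) far by blast
  moreover assume "(f p < f q) \<noteq> (f p < f q')"
  ultimately have "min (f q) (f q') \<le> f p" and "f p \<le> max (f q) (f q')" by auto
  then obtain t where "t \<in> {q..q'}" and "d p t < d p q"
    using near_interval_if_between[OF assms(1-3,5), of "d p q - 2 * eps * M"] far by auto
  then show False using orderly_le_right[OF orderly, of p q t] \<open>p < q\<close> by simp
qed

lemma order_extend_left:
  assumes "p \<in> I" and "q \<in> I" and "p' \<in> I" and "p' \<le> p" and "p < q"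
    and far: "d p q > 2 * eps * M"
  shows "f p < f q \<longleftrightarrow> f p' < f q"
proof (rule ccontr)
  interpret Metric_space UNIV d using orderly by (rule orderly_metric_space)
  have "d p' q > 2 * eps * M" using orderly_le_left[OF orderly, of p' p q] assms(4,5) far by linarith
  then have "f p' \<noteq> f q" using far_imp_neq assms(2,3) by blast
  moreover have "f p \<noteq> f q" using far_imp_neq assms(1,2) far by blast
  moreover assume "(f p < f q) \<noteq> (f p' < f q)"
  ultimately have "min (f p') (f p) \<le> f q" and "f q \<le> max (f p') (f p)" by auto
  then obtain t where "t \<in> {p'..p}" and "d q t < d p q"
    using near_interval_if_between[OF assms(2,3,1,4), of "d p q - 2 * eps * M"] far by auto
  then show False using orderly_le_left[OF orderly, of t p q] \<open>p < q\<close> by (simp add: commute)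
qed

lemma order_extend:
  assumes "p \<in> I" and "q \<in> I" and "p' \<in> I" and "q' \<in> I"
    and "p' \<le> p" and "p < q" and "q \<le> q'" and "d p q > 2 * eps * M"
  shows "f p < f q \<longleftrightarrow> f p' < f q'"
proof -
  have "d p q' > 2 * eps * M" using orderly_le_right[OF orderly, of p q q'] assms by simp
  then show ?thesis using order_extend_right[of p q q'] order_extend_left[of p q' p'] assms by auto
qed

lemma delta_monotone_2_eps_M: "delta_monotone d (2 * eps * M) I f"
proof (cases "\<exists>a\<in>I. \<exists>b\<in>I. a < b \<and> d a b > 2 * eps * M \<and> f a < f b")
  case True
  then obtain a b where ab: "a \<in> I" "b \<in> I" "a < b" "d a b > 2 * eps * M" "f a < f b" by blast
  have "f a' < f b'" if "a' \<in> I" "b' \<in> I" "a' < b'" "d a' b' > 2 * eps * M" for a' b'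
  proof -
    \<comment> \<open>Both far pairs sit inside the far pair (min a a', max b b').\<close>
    have hull: "min a a' \<in> I" "max b b' \<in> I" using ab that by (auto simp: min_def max_def)
    have "f a < f b \<longleftrightarrow> f (min a a') < f (max b b')"
      by (rule order_extend) (use ab hull in auto)
    moreover have "f a' < f b' \<longleftrightarrow> f (min a a') < f (max b b')"
      by (rule order_extend) (use that hull in auto)
    ultimately show ?thesis using ab(5) by blast
  qed
  then show ?thesis unfolding delta_monotone_def by blast
next
  case False
  have "f a > f b" if "a \<in> I" "b \<in> I" "a < b" "d a b > 2 * eps * M" for a b
    using False far_imp_neq[OF that(1,2,4)] that by (auto simp: neq_iff)
  then show ?thesis unfolding delta_monotone_def by blast
qed

lemma INF_dist_image_le:
  assumes "a \<in> I" and "b \<in> I" and "a \<le> b" and "y \<in> {f a..f b}"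
  shows "(INF x\<in>{a..b}. d y (f x)) \<le> eps"
proof (rule field_le_epsilon)
  interpret Metric_space UNIV d using orderly by (rule orderly_metric_space)
  fix r :: real
  assume "r > 0"
  then obtain t where "t \<in> {a..b}" and "d y (f t) < eps + r"
    using dense_image_between[of a b y r] assms by auto
  moreover have "(INF x\<in>{a..b}. d y (f x)) \<le> d y (f t)"
    using \<open>t \<in> {a..b}\<close> by (intro cINF_lower bdd_belowI[of _ 0]) auto
  ultimately show "(INF x\<in>{a..b}. d y (f x)) \<le> eps + r" by simp
qed

end

theorem lemma3p10:
  fixes I :: "real set" and d :: "real \<Rightarrow> real \<Rightarrow> real" and f :: "real \<Rightarrow> real"
    and M eps :: real
  assumes "is_interval I" and "open I \<or> closed I"
    and "orderly d"
    and "M \<ge> 1" and "eps \<ge> 0"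
    and "qi_embedding M eps d I d f"
  shows "delta_monotone d (2 * eps * M) I f \<and>
    (\<forall>a\<in>I. \<forall>b\<in>I. a \<le> b \<longrightarrow>
       (\<forall>y\<in>{f a..f b}. (INF x\<in>{a..b}. d y (f x)) \<le> eps))"
proof -
  interpret orderly_qi_embedding d I f M eps
    using assms by unfold_locales auto
  show ?thesis using delta_monotone_2_eps_M INF_dist_image_le by blast
qed

end
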